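(* Assume the metric $d$ is such that $p\mapsto d(p,0)$ is $C^1$ on $\mathbb G\setminus\{0\}$. Define $$\Omega(p)=\left(\frac{p_1}{d(p,0)^2},\frac{p_2}{d(p,0)^3},\dots,\frac{p_s}{d(p,0)^{s+1}}\right),\qquad p=(p_1,\dots,p_s)\in\mathbb G\setminus\{0\},\ p_i\in\mathbb R^{\dim V_i}.$$ Then each scalar coordinate function of $\Omega$ is a $1$-dimensional CZ kernel which satisfies the annular boundedness condition.
   Context: $\mathbb G$ is a step-$s$ Carnot group with stratification $\mathfrak g=V_1\oplus\cdots\oplus V_s$, identified with $\mathbb R^N$ via exponential coordinates adapted to the stratification; identity $0$, $p^{-1}=-p$, dilations $\delta_t(p)=(tp_1,\dots,t^sp_s)$. $d$ is a fixed left-invariant homogeneous metric with $d((v,0,\dots,0),0)=|v|$; $\mathcal H^1$ the $1$-dimensional Hausdorff measure for $d$. A horizontal line is $\{(sv,0,\dots,0):s\in\mathbb R\}$, $v\in\mathbb R^{\dim V_1}\setminus\{0\}$. A $1$-dimensional CZ kernel is a continuous $K:\mathbb G\setminus\{0\}\to\mathbb R$ with $B>0$, $\beta\in(0,1]$ such that $|K(p)|\le B/d(p,0)$ and $|K(q^{-1}p_1)-K(q^{-1}p_2)|+|K(p_1^{-1}q)-K(p_2^{-1}q)|\le B\,d(p_1,p_2)^\beta/d(p_1,q)^{1+\beta}$ whenever $d(p_1,p_2)\le d(p_1,q)/2$. $\psi$ is $\mathbb G$-radial if $\psi(p)=f(d(p,0))$; $\psi^r=\psi\circ\delta_{1/r}$.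 $K$ satisfies annular boundedness if for every $\mathbb G$-radial $C^\infty$ $\psi$ with $\chi_{B(0,1/2)}\le\psi\le\chi_{B(0,2)}$ there is $A\ge1$ with $\left|\int_L[\psi^R-\psi^r]K\,d\mathcal H^1\right|\le A$ for all $0<r<R$ and all horizontal lines $L$. *)

theory Defs
  imports "HOL-Analysis.Analysis"
begin

text \<open>The group is real^'n; deg i in {1..s} is the layer of coordinate i.
  layer deg j is V_j (vectors supported on the coordinates of degree j).\<close>

definition layer :: "('n \<Rightarrow> nat) \<Rightarrow> nat \<Rightarrow> (real^'n) set" where
  "layer deg j = {x. \<forall>i. deg i \<noteq> j \<longrightarrow> x $ i = 0}"

definition dil :: "('n \<Rightarrow> nat) \<Rightarrow> real \<Rightarrow> real^'n \<Rightarrow> real^'n" where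
  "dil deg t p = (\<chi> i. t ^ (deg i) * p $ i)"

inductive poly_fun :: "('a::real_vector \<Rightarrow> real) \<Rightarrow> bool" where
  pf_const: "poly_fun (\<lambda>x. c)"
| pf_lin: "linear f \<Longrightarrow> poly_fun f"
| pf_add: "poly_fun f \<Longrightarrow> poly_fun g \<Longrightarrow> poly_fun (\<lambda>x. f x + g x)"
| pf_mult: "poly_fun f \<Longrightarrow> poly_fun g \<Longrightarrow> poly_fun (\<lambda>x. f x * g x)"

text \<open>Lie bracket read off from the group law in exponential coordinates
  (BCH: tX*tY = tX + tY + t^2/2 [X,Y] + O(t^3)).\<close>
definition lie_bracket :: "(real^'n \<Rightarrow> real^'n \<Rightarrow> real^'n) \<Rightarrow> real^'n \<Rightarrow> real^'n \<Rightarrow> real^'n" where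
  "lie_bracket gmul X Y =
     Lim (at (0::real)) (\<lambda>t. (2 / t^2) *\<^sub>R (gmul (t *\<^sub>R X) (t *\<^sub>R Y) - t *\<^sub>R X - t *\<^sub>R Y))"

text \<open>A step-s Carnot group structure on real^'n, in exponential coordinates
  adapted to the stratification V_1 + ... + V_s.\<close>
definition carnot_group :: "(real^'n \<Rightarrow> real^'n \<Rightarrow> real^'n) \<Rightarrow> ('n \<Rightarrow> nat) \<Rightarrow> nat \<Rightarrow> bool" where
  "carnot_group gmul deg s \<longleftrightarrow>
     1 \<le> s \<and> range deg = {1..s} \<and>
     (\<forall>p q r. gmul (gmul p q) r = gmul p (gmul q r)) \<and>
     (\<forall>p. gmul 0 p = p \<and> gmul p 0 = p \<and> gmul p (- p) = 0 \<and> gmul (- p) p = 0) \<and>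
     (\<forall>i. poly_fun (\<lambda>z :: (real^'n) \<times> (real^'n). gmul (fst z) (snd z) $ i)) \<and>
     (\<forall>X a b. gmul (a *\<^sub>R X) (b *\<^sub>R X) = (a + b) *\<^sub>R X) \<and>
     (\<forall>j. 1 \<le> j \<and> j < s \<longrightarrow>
        span {lie_bracket gmul X Y | X Y. X \<in> layer deg 1 \<and> Y \<in> layer deg j} = layer deg (Suc j)) \<and>
     (\<forall>X\<in>layer deg 1. \<forall>Y\<in>layer deg s. lie_bracket gmul X Y = 0)"

definition homogeneous_metric :: "(real^'n \<Rightarrow> real^'n \<Rightarrow> real^'n) \<Rightarrow> ('n \<Rightarrow> nat) \<Rightarrow> (real^'n \<Rightarrow> real^'n \<Rightarrow> real) \<Rightarrow> bool" where
  "homogeneous_metric gmul deg d \<longleftrightarrow>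
     Metric_space UNIV d \<and>
     (\<forall>p q r. d (gmul r p) (gmul r q) = d p q) \<and>
     (\<forall>t>0. \<forall>p q. d (dil deg t p) (dil deg t q) = t * d p q)"

definition diam_d :: "('a \<Rightarrow> 'a \<Rightarrow> real) \<Rightarrow> 'a set \<Rightarrow> ennreal" where
  "diam_d d C = (SUP x\<in>C. SUP y\<in>C. ennreal (d x y))"

definition hausdorff1_delta :: "('a \<Rightarrow> 'a \<Rightarrow> real) \<Rightarrow> real \<Rightarrow> 'a set \<Rightarrow> ennreal" where
  "hausdorff1_delta d \<delta> A =
     (INF C \<in> {C :: nat \<Rightarrow> 'a set. A \<subseteq> (\<Union>i. C i) \<and> (\<forall>i. diam_d d (C i) \<le> ennreal \<delta>)}.
        (\<Sum>i. diam_d d (C i)))"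

definition hausdorff1 :: "('a \<Rightarrow> 'a \<Rightarrow> real) \<Rightarrow> 'a set \<Rightarrow> ennreal" where
  "hausdorff1 d A = (SUP \<delta>\<in>{0<..}. hausdorff1_delta d \<delta> A)"

definition H1_measure :: "(real^'n \<Rightarrow> real^'n \<Rightarrow> real) \<Rightarrow> (real^'n) measure" where
  "H1_measure d = measure_of UNIV (sets borel) (hausdorff1 d)"

definition horizontal_lines :: "('n \<Rightarrow> nat) \<Rightarrow> (real^'n) set set" where
  "horizontal_lines deg = {L. \<exists>v\<in>layer deg 1. v \<noteq> 0 \<and> L = range (\<lambda>t::real. t *\<^sub>R v)}"

text \<open>1-dimensional CZ kernel; q^{-1} p is gmul (-q) p.\<close>
definition CZ_kernel :: "(real^'n \<Rightarrow> real^'n \<Rightarrow> real^'n) \<Rightarrow> (real^'n \<Rightarrow> real^'n \<Rightarrow> real) \<Rightarrow> (real^'n \<Rightarrow> real) \<Rightarrow> bool" where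
  "CZ_kernel gmul d K \<longleftrightarrow>
     continuous_on (- {0}) K \<and>
     (\<exists>B>0. \<exists>\<beta>. 0 < \<beta> \<and> \<beta> \<le> 1 \<and>
        (\<forall>p. p \<noteq> 0 \<longrightarrow> \<bar>K p\<bar> \<le> B / d p 0) \<and>
        (\<forall>p1 p2 q. d p1 p2 \<le> d p1 q / 2 \<longrightarrow>
            \<bar>K (gmul (- q) p1) - K (gmul (- q) p2)\<bar> + \<bar>K (gmul (- p1) q) - K (gmul (- p2) q)\<bar>
              \<le> B * d p1 p2 powr \<beta> / d p1 q powr (1 + \<beta>)))"

fun Ck :: "nat \<Rightarrow> ('a::euclidean_space \<Rightarrow> real) \<Rightarrow> bool" where
  "Ck 0 f = continuous_on UNIV f"
| "Ck (Suc k) f = ((\<forall>x. f differentiable (at x)) \<and>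
      (\<forall>b\<in>Basis. Ck k (\<lambda>x. frechet_derivative f (at x) b)))"

definition smooth_fun :: "('a::euclidean_space \<Rightarrow> real) \<Rightarrow> bool" where
  "smooth_fun f \<longleftrightarrow> (\<forall>k. Ck k f)"

definition radial :: "(real^'n \<Rightarrow> real^'n \<Rightarrow> real) \<Rightarrow> (real^'n \<Rightarrow> real) \<Rightarrow> bool" where
  "radial d \<psi> \<longleftrightarrow> (\<exists>f. \<forall>p. \<psi> p = f (d p 0))"

definition dball0 :: "(real^'n \<Rightarrow> real^'n \<Rightarrow> real) \<Rightarrow> real \<Rightarrow> (real^'n) set" where
  "dball0 d r = {p. d p 0 < r}"

text \<open>psi^r = psi o dil (1/r).\<close>
definition annular_bounded :: "('n \<Rightarrow> nat) \<Rightarrow> (real^'n \<Rightarrow> real^'n \<Rightarrow> real) \<Rightarrow> (real^'n \<Rightarrow> real) \<Rightarrow> bool" where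
  "annular_bounded deg d K \<longleftrightarrow>
     (\<forall>\<psi>. smooth_fun \<psi> \<and> radial d \<psi> \<and>
          (\<forall>p. indicator (dball0 d (1/2)) p \<le> \<psi> p \<and> \<psi> p \<le> indicator (dball0 d 2) p) \<longrightarrow>
        (\<exists>A\<ge>1. \<forall>r R. 0 < r \<and> r < R \<longrightarrow>
           (\<forall>L\<in>horizontal_lines deg.
              \<bar>LINT p:L|H1_measure d. (\<psi> (dil deg (1/R) p) - \<psi> (dil deg (1/r) p)) * K p\<bar> \<le> A)))"

definition Omega :: "('n \<Rightarrow> nat) \<Rightarrow> (real^'n \<Rightarrow> real^'n \<Rightarrow> real) \<Rightarrow> real^'n \<Rightarrow> real^'n" where
  "Omega deg d p = (\<chi> i. p $ i / d p 0 ^ (deg i + 1))"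

end

theory Submission
  imports Defs
begin

text \<open>Omega is homogeneous of degree -1 under the dilations and odd, since d(-p,0) = d(p,0).
  Continuity of d(\<cdot>,0) off 0 gives \<bar>p_i\<bar> \<le> (d(p,0)/c)^(deg i), and with the polynomial
  group law this makes Omega Lipschitz for d near the unit sphere of d. A left translation
  and a dilation carry an arbitrary configuration of the CZ estimates to that situation,
  giving them with exponent 1. Annular boundedness is automatic for an odd kernel: radial
  cut-offs are even, horizontal lines are symmetric and H^1 on them is invariant under
  p \<mapsto> -p, so every truncated integral vanishes.\<close>

lemma poly_fun_bounded_lipschitz_on_cball:
  fixes f :: "'a::euclidean_space \<Rightarrow> real"
  assumes "poly_fun f"
  shows "\<exists>M C. (\<forall>x\<in>cball 0 R. \<bar>f x\<bar> \<le> M) \<and> C-lipschitz_on (cball 0 R) f"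
  using assms
proof induction
  case (pf_const c)
  show ?case using lipschitz_on_constant by blast
next
  case (pf_lin f)
  then interpret bounded_linear f by (simp add: linear_conv_bounded_linear)
  obtain K where K: "\<And>x. norm (f x) \<le> norm x * K" "0 < K" using pos_bounded by blast
  have "\<bar>f x\<bar> \<le> R * K" if "x \<in> cball 0 R" for x
  proof -
    have "norm x * K \<le> R * K" using that K(2) by (simp add: mult_right_mono)
    then show ?thesis using K(1)[of x] by simp
  qed
  moreover obtain C where "C-lipschitz_on (cball 0 R) f" using lipschitz_boundE by blast
  ultimately show ?case by blast
next
  case (pf_add f g)
  then obtain M1 C1 M2 C2 where
    f_bound: "\<forall>x\<in>cball 0 R. \<bar>f x\<bar> \<le> M1" and f_lip: "C1-lipschitz_on (cball 0 R) f" and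
    g_bound: "\<forall>x\<in>cball 0 R. \<bar>g x\<bar> \<le> M2" and g_lip: "C2-lipschitz_on (cball 0 R) g"
    by blast
  have "\<bar>f x + g x\<bar> \<le> M1 + M2" if "x \<in> cball 0 R" for x
    using f_bound g_bound that abs_triangle_ineq[of "f x" "g x"] by fastforce
  moreover have "(C1 + C2)-lipschitz_on (cball 0 R) (\<lambda>x. f x + g x)"
    using f_lip g_lip by (rule lipschitz_on_add)
  ultimately show ?case by blast
next
  case (pf_mult f g)
  then obtain M1 C1 M2 C2 where
    f: "\<forall>x\<in>cball 0 R. \<bar>f x\<bar> \<le> M1" "C1-lipschitz_on (cball 0 R) f" and
    g: "\<forall>x\<in>cball 0 R. \<bar>g x\<bar> \<le> M2" "C2-lipschitz_on (cball 0 R) g"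
    by blast
  have bound: "\<bar>f x\<bar> \<le> \<bar>M1\<bar>" "\<bar>g x\<bar> \<le> \<bar>M2\<bar>" if "x \<in> cball 0 R" for x
    using f(1) g(1) that by (auto intro: order_trans[OF _ abs_ge_self])
  have "\<bar>f x * g x\<bar> \<le> \<bar>M1\<bar> * \<bar>M2\<bar>" if "x \<in> cball 0 R" for x
    using bound[OF that] unfolding abs_mult by (intro mult_mono) auto
  moreover have "(\<bar>M1\<bar> * C2 + \<bar>M2\<bar> * C1)-lipschitz_on (cball 0 R) (\<lambda>x. f x * g x)"
  proof (rule lipschitz_onI)
    fix x y :: 'a assume xy: "x \<in> cball 0 R" "y \<in> cball 0 R"
    have "\<bar>f x * (g x - g y)\<bar> \<le> \<bar>M1\<bar> * (C2 * dist x y)"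
      using bound(1)[OF xy(1)] lipschitz_onD[OF g(2) xy] unfolding abs_mult dist_real_def
      by (intro mult_mono) auto
    moreover have "\<bar>g y * (f x - f y)\<bar> \<le> \<bar>M2\<bar> * (C1 * dist x y)"
      using bound(2)[OF xy(2)] lipschitz_onD[OF f(2) xy] unfolding abs_mult dist_real_def
      by (intro mult_mono) auto
    moreover have "f x * g x - f y * g y = f x * (g x - g y) + g y * (f x - f y)"
      by (simp add: algebra_simps)
    ultimately show "dist (f x * g x) (f y * g y) \<le> (\<bar>M1\<bar> * C2 + \<bar>M2\<bar> * C1) * dist x y"
      unfolding dist_real_def by (smt (verit) distrib_right mult.assoc)
  next
    show "0 \<le> \<bar>M1\<bar> * C2 + \<bar>M2\<bar> * C1"
      using lipschitz_on_nonneg[OF f(2)] lipschitz_on_nonneg[OF g(2)] by simp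
  qed
  ultimately show ?case by blast
qed

lemma hausdorff1_image_le:
  assumes "\<forall>x\<in>A. \<forall>y\<in>A. d (f x) (f y) \<le> d x y" and "B \<subseteq> A"
  shows "hausdorff1 d (f ` B) \<le> hausdorff1 d B"
proof -
  have "hausdorff1_delta d \<delta> (f ` B) \<le> hausdorff1_delta d \<delta> B" for \<delta>
    unfolding hausdorff1_delta_def
  proof (rule INF_mono)
    fix C :: "nat \<Rightarrow> 'a set"
    assume C: "C \<in> {C. B \<subseteq> (\<Union>i. C i) \<and> (\<forall>i. diam_d d (C i) \<le> ennreal \<delta>)}"
    define C' where "C' i = f ` (C i \<inter> A)" for i :: nat
    have diam: "diam_d d (C' i) \<le> diam_d d (C i)" for i
    proof -
      have "ennreal (d (f x) (f y)) \<le> diam_d d (C i)" if "x \<in> C i \<inter> A" "y \<in> C i \<inter> A" for x y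
      proof -
        have "ennreal (d (f x) (f y)) \<le> ennreal (d x y)"
          using assms(1) that by (auto intro: ennreal_leI)
        also have "\<dots> \<le> (SUP y\<in>C i. ennreal (d x y))"
          using that by (intro SUP_upper) auto
        also have "\<dots> \<le> diam_d d (C i)"
          unfolding diam_d_def using that by (intro SUP_upper[of x "C i" "\<lambda>x. SUP y\<in>C i. ennreal (d x y)"]) auto
        finally show ?thesis .
      qed
      then have "(SUP x\<in>C i \<inter> A. SUP y\<in>C i \<inter> A. ennreal (d (f x) (f y))) \<le> diam_d d (C i)"
        by (intro SUP_least) auto
      then show ?thesis unfolding C'_def diam_d_def[of d "f ` (C i \<inter> A)"] by (simp add: image_image)
    qed
    have "f ` B \<subseteq> (\<Union>i. C' i)" using C assms(2) unfolding C'_def by blast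
    moreover have "\<forall>i. diam_d d (C' i) \<le> ennreal \<delta>" using C diam order.trans by blast
    moreover have "(\<Sum>i. diam_d d (C' i)) \<le> (\<Sum>i. diam_d d (C i))"
      using diam by (intro suminf_le) auto
    ultimately show "\<exists>C'\<in>{C. f ` B \<subseteq> (\<Union>i. C i) \<and> (\<forall>i. diam_d d (C i) \<le> ennreal \<delta>)}.
        (\<Sum>i. diam_d d (C' i)) \<le> (\<Sum>i. diam_d d (C i))"
      by blast
  qed
  then show ?thesis unfolding hausdorff1_def by (intro SUP_mono) auto
qed

lemma sets_H1_measure: "sets (H1_measure d) = sets borel"
  unfolding H1_measure_def by (simp add: sets_measure_of_conv sets.sigma_sets_eq[of borel, simplified])

text \<open>H1_measure is a measure_of, hence junk unless hausdorff1 is countably additive on the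
  Borel sets; comparing two Borel sets with equal hausdorff1 values avoids that question.\<close>
lemma emeasure_H1_measure_eqI:
  assumes "A \<in> sets borel" "B \<in> sets borel" "hausdorff1 d A = hausdorff1 d B"
  shows "emeasure (H1_measure d) A = emeasure (H1_measure d) B"
  using assms unfolding H1_measure_def
  by (simp add: emeasure_measure_of_conv sets.sigma_sets_eq[of borel, simplified])

lemma emeasure_H1_measure_uminus_image:
  fixes L A :: "(real^'n) set"
  assumes "\<And>x. x \<in> L \<Longrightarrow> - x \<in> L" and "\<forall>x\<in>L. \<forall>y\<in>L. d (- x) (- y) = d x y"
    and "A \<subseteq> L" and "A \<in> sets borel"
  shows "emeasure (H1_measure d) (uminus ` A) = emeasure (H1_measure d) A"
proof -
  have "(uminus :: real^'n \<Rightarrow> real^'n) \<in> borel_measurable borel"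
    by (intro borel_measurable_continuous_onI continuous_intros)
  from measurable_sets[OF this assms(4)] have "uminus -` A \<in> sets borel" by simp
  moreover have "uminus ` A = uminus -` A" by (auto simp: image_iff) (metis minus_minus)
  ultimately have "uminus ` A \<in> sets borel" by simp
  moreover note \<open>A \<in> sets borel\<close>
  moreover have "hausdorff1 d (uminus ` A) = hausdorff1 d A"
  proof (rule antisym)
    show "hausdorff1 d (uminus ` A) \<le> hausdorff1 d A"
      using assms(2,3) by (intro hausdorff1_image_le[of L]) auto
    have "hausdorff1 d (uminus ` uminus ` A) \<le> hausdorff1 d (uminus ` A)"
      using assms(1-3) by (intro hausdorff1_image_le[of L]) auto
    then show "hausdorff1 d A \<le> hausdorff1 d (uminus ` A)" by (simp add: image_image)
  qed
  ultimately show ?thesis by (rule emeasure_H1_measure_eqI)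
qed

lemma set_integral_odd_eq_0:
  fixes M :: "'a::real_normed_vector measure" and f :: "'a \<Rightarrow> 'b::{banach, second_countable_topology}"
  assumes M: "sets M = sets borel" and L: "L \<in> sets borel" "\<And>x. x \<in> L \<Longrightarrow> - x \<in> L"
    and M_uminus: "\<And>A. A \<in> sets borel \<Longrightarrow> A \<subseteq> L \<Longrightarrow> emeasure M (uminus ` A) = emeasure M A"
    and f: "f \<in> borel_measurable borel" "\<And>x. f (- x) = - f x"
  shows "set_lebesgue_integral M L f = 0"
proof -
  define N where "N = restrict_space M L"
  have space_M: "space M = UNIV" using sets_eq_imp_space_eq[OF M] by simp
  have L_M: "L \<inter> space M \<in> sets M" using L M space_M by simp
  have space_N: "space N = L" unfolding N_def using space_M by (simp add: space_restrict_space)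
  have "uminus \<in> borel \<rightarrow>\<^sub>M (borel :: 'a measure)"
    by (intro borel_measurable_continuous_onI continuous_intros)
  then have uminus_N: "uminus \<in> measurable N N"
    unfolding N_def using L(2) measurable_cong_sets[OF M M]
    by (intro measurable_restrict_space3) auto
  have "f \<in> borel_measurable M" using f(1) measurable_cong_sets[OF M refl] by blast
  then have f_N: "f \<in> borel_measurable N" unfolding N_def by (rule measurable_restrict_space1)
  have "distr N N uminus = N"
  proof (rule measure_eqI)
    fix A assume "A \<in> sets (distr N N uminus)"
    then have A: "A \<in> sets N" by simp
    then obtain A' where "A' \<in> sets M" "A = L \<inter> A'"
      unfolding N_def sets_restrict_space by blast
    then have A_L: "A \<subseteq> L" and A_borel: "A \<in> sets borel" using M L by auto
    have "uminus -` A \<inter> space N = uminus ` A"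
      using A_L L(2) unfolding space_N by (auto simp: image_iff) (metis minus_minus)+
    then have "emeasure (distr N N uminus) A = emeasure N (uminus ` A)"
      using emeasure_distr[OF uminus_N A] by simp
    also have "\<dots> = emeasure M (uminus ` A)"
      unfolding N_def using A_L L(2) by (intro emeasure_restrict_space[OF L_M]) blast
    also have "\<dots> = emeasure M A" by (rule M_uminus[OF A_borel A_L])
    also have "\<dots> = emeasure N A"
      unfolding N_def by (rule emeasure_restrict_space[OF L_M A_L, symmetric])
    finally show "emeasure (distr N N uminus) A = emeasure N A" .
  qed simp
  then have "integral\<^sup>L N f = integral\<^sup>L N (\<lambda>x. f (- x))"
    using integral_distr[OF uminus_N f_N] by simp
  also have "\<dots> = - integral\<^sup>L N f" unfolding f(2) by (rule integral_minus)
  finally have "integral\<^sup>L N f = 0"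
    by (metis add.right_inverse scaleR_2 scaleR_eq_0_iff zero_neq_numeral)
  moreover have "set_lebesgue_integral M L f = integral\<^sup>L N f"
    unfolding set_lebesgue_integral_def N_def by (rule integral_restrict_space[OF L_M, symmetric])
  ultimately show ?thesis by simp
qed

lemma dil_dil: "dil deg a (dil deg b p) = dil deg (a * b) p"
  by (simp add: dil_def vec_eq_iff power_mult_distrib)

lemma dil_1 [simp]: "dil deg 1 p = p"
  and dil_0 [simp]: "dil deg t 0 = 0"
  and dil_uminus: "dil deg t (- p) = - dil deg t p"
  and dil_component [simp]: "dil deg t p $ i = t ^ deg i * p $ i"
  by (simp_all add: dil_def vec_eq_iff)

lemma dil_infnorm_decomposition:
  fixes p :: "real^'n"
  assumes deg: "\<And>j. 0 < deg j" and "p \<noteq> 0"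
  obtains t u where "0 < t" "infnorm u = 1" "p = dil deg t u"
proof -
  define t where "t = Max (range (\<lambda>j. root (deg j) \<bar>p $ j\<bar>))"
  have t_ge: "root (deg j) \<bar>p $ j\<bar> \<le> t" for j unfolding t_def by (rule Max_ge) auto
  have "t \<in> range (\<lambda>j. root (deg j) \<bar>p $ j\<bar>)" unfolding t_def by (rule Max_in) auto
  then obtain i where i: "t = root (deg i) \<bar>p $ i\<bar>" by blast
  obtain j where "p $ j \<noteq> 0" using \<open>p \<noteq> 0\<close> by (auto simp: vec_eq_iff)
  then have "0 < t" using t_ge[of j] deg[of j] by (smt (verit) real_root_gt_zero zero_less_abs_iff)
  have root_pow: "root (deg j) \<bar>p $ j\<bar> ^ deg j = \<bar>p $ j\<bar>" for j
    using deg[of j] by (simp add: real_root_pow_pos2)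
  define u where "u = dil deg (1 / t) p"
  have u: "\<bar>u $ j\<bar> = \<bar>p $ j\<bar> / t ^ deg j" for j
    unfolding u_def using \<open>0 < t\<close> by (simp add: abs_mult power_divide)
  have "\<bar>u $ j\<bar> \<le> 1" for j
    using power_mono[OF t_ge[of j], of "deg j"] \<open>0 < t\<close> root_pow[of j] by (simp add: u real_root_ge_zero)
  moreover have "\<bar>u $ i\<bar> = 1"
    using \<open>0 < t\<close> root_pow[of i] by (cases "p $ i = 0") (simp_all add: u i)
  ultimately have "infnorm u = 1"
    unfolding infnorm_cart by (intro cSup_eq_maximum) auto
  moreover have "p = dil deg t u"
    unfolding u_def dil_dil using \<open>0 < t\<close> by simp
  ultimately show thesis using that \<open>0 < t\<close> by blast
qed

lemma horizontal_line_uminus: "L \<in> horizontal_lines deg \<Longrightarrow> x \<in> L \<Longrightarrow> - x \<in> L"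
  unfolding horizontal_lines_def by (auto intro: image_eqI[where x = "- _"])

lemma horizontal_line_borel: "L \<in> horizontal_lines deg \<Longrightarrow> L \<in> sets borel"
  unfolding horizontal_lines_def by (auto simp: span_singleton[symmetric])

lemma abs_inverse_power_sub_one_le:
  fixes a :: real
  assumes "1/2 \<le> a" "a \<le> 2"
  shows "\<bar>1 / a ^ m - 1\<bar> \<le> 4 ^ m * real m * \<bar>a - 1\<bar>"
proof -
  have "\<bar>(a/2) ^ m - (1/2) ^ m\<bar> \<le> m * \<bar>a/2 - 1/2\<bar>"
    using norm_power_diff[of "a/2" "1/2" m] assms by simp
  then have "2 * \<bar>a ^ m - 1\<bar> \<le> m * (\<bar>a - 1\<bar> * 2 ^ m)"
    by (simp add: power_divide abs_div field_simps)
  then have "\<bar>a ^ m - 1\<bar> \<le> m * (\<bar>a - 1\<bar> * 2 ^ m)"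
    using order_trans[of "\<bar>a ^ m - 1\<bar>" "2 * \<bar>a ^ m - 1\<bar>"] by simp
  then have power_diff: "\<bar>a ^ m - 1\<bar> \<le> 2 ^ m * real m * \<bar>a - 1\<bar>"
    by (simp add: algebra_simps)
  have "0 < a" using assms by simp
  have "(1/2) ^ m \<le> a ^ m" using assms by (intro power_mono) auto
  then have "1 / a ^ m \<le> 2 ^ m"
    using \<open>0 < a\<close> by (simp add: power_divide field_simps)
  have "\<bar>1 / a ^ m - 1\<bar> = \<bar>a ^ m - 1\<bar> * (1 / a ^ m)"
    using \<open>0 < a\<close> by (simp add: field_simps abs_div abs_minus_commute)
  also have "\<dots> \<le> \<bar>a ^ m - 1\<bar> * 2 ^ m"
    using \<open>1 / a ^ m \<le> 2 ^ m\<close> by (intro mult_left_mono) auto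
  also have "\<dots> \<le> 2 ^ m * real m * \<bar>a - 1\<bar> * 2 ^ m"
    using power_diff by (intro mult_right_mono) auto
  also have "\<dots> = 4 ^ m * real m * \<bar>a - 1\<bar>"
    by (simp flip: power_mult_distrib)
  finally show ?thesis .
qed

locale carnot_homogeneous_metric =
  fixes gmul :: "real^'n \<Rightarrow> real^'n \<Rightarrow> real^'n"
    and deg :: "'n \<Rightarrow> nat" and s :: nat
    and d :: "real^'n \<Rightarrow> real^'n \<Rightarrow> real"
  assumes carnot: "carnot_group gmul deg s"
    and homogeneous: "homogeneous_metric gmul deg d"
    and isCont_dist_0: "\<And>p. p \<noteq> 0 \<Longrightarrow> isCont (\<lambda>q. d q 0) p"
begin

sublocale metric: Metric_space UNIV d
  using homogeneous unfolding homogeneous_metric_def by blast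

lemma dist_left_translate: "d (gmul r p) (gmul r q) = d p q"
  and dist_dil: "0 < t \<Longrightarrow> d (dil deg t p) (dil deg t q) = t * d p q"
  using homogeneous unfolding homogeneous_metric_def by blast+

lemma gmul_assoc: "gmul (gmul p q) r = gmul p (gmul q r)"
  and gmul_0_left [simp]: "gmul 0 p = p"
  and gmul_0_right [simp]: "gmul p 0 = p"
  and gmul_uminus_right [simp]: "gmul p (- p) = 0"
  and gmul_uminus_left [simp]: "gmul (- p) p = 0"
  and gmul_polynomial: "poly_fun (\<lambda>z. gmul (fst z) (snd z) $ i)"
  and gmul_one_parameter: "gmul (a *\<^sub>R X) (b *\<^sub>R X) = (a + b) *\<^sub>R X"
  using carnot unfolding carnot_group_def by blast+

lemma deg_pos: "0 < deg i"
proof -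
  have "deg i \<in> range deg" by simp
  then show ?thesis using carnot unfolding carnot_group_def by auto
qed

lemma dist_0_pos: "p \<noteq> 0 \<Longrightarrow> 0 < d p 0"
  using metric.nonneg[of p 0] metric.zero[of p 0] by (auto simp: less_le)

lemma gmul_cancel_left [simp]: "gmul p (gmul (- p) q) = q" "gmul (- p) (gmul p q) = q"
  by (simp_all flip: gmul_assoc)

lemma dist_dil_0: "0 < t \<Longrightarrow> d (dil deg t p) 0 = t * d p 0"
  using dist_dil[of t p 0] by simp

lemma dist_translate_0: "d (gmul (- q) p) 0 = d p q"
  using dist_left_translate[of "- q" p q] by simp

lemma dist_uminus_0: "d (- p) 0 = d p 0"
  using dist_translate_0[of p 0] by (simp add: metric.commute)

lemma gmul_uminus_swap: "gmul (- p) q = - gmul (- q) p"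
proof -
  have inverse_unique: "w' = - w" if "gmul w w' = 0" for w w'
    using gmul_assoc[of "- w" w w'] that by simp
  have "gmul (gmul (- q) p) (gmul (- p) q) = 0" by (simp add: gmul_assoc)
  then show ?thesis by (rule inverse_unique)
qed

lemma continuous_on_dist_0: "continuous_on (- {0}) (\<lambda>q. d q 0)"
  using isCont_dist_0 by (intro continuous_at_imp_continuous_on) auto

text \<open>d(\<cdot>,0) attains a positive minimum c on the compact sup-norm unit sphere, and every
  point is a dilate of a point of that sphere.\<close>
lemma component_le_dist_0: "\<exists>c>0. \<forall>p i. \<bar>p $ i\<bar> \<le> (d p 0 / c) ^ deg i"
proof -
  define S where "S = {u :: real^'n. infnorm u = 1}"
  have "closed S" unfolding S_def by (intro closed_Collect_eq continuous_intros)
  moreover have "norm u \<le> sqrt DIM(real^'n)" if "u \<in> S" for u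
    using norm_le_infnorm[of u] that unfolding S_def by simp
  then have "bounded S" unfolding bounded_iff by blast
  ultimately have "compact S" by (simp add: compact_eq_bounded_closed)
  have "(1 :: real^'n) \<noteq> 0" by (simp add: vec_eq_iff)
  then have "infnorm ((1 / infnorm (1 :: real^'n)) *\<^sub>R (1 :: real^'n)) = 1"
    by (simp add: infnorm_mul infnorm_eq_0 real_abs_infnorm)
  then have "S \<noteq> {}" unfolding S_def by blast
  have "S \<subseteq> - {0}" unfolding S_def by (auto simp: infnorm_0)
  obtain u0 where u0: "u0 \<in> S" "\<And>u. u \<in> S \<Longrightarrow> d u0 0 \<le> d u 0"
    using continuous_attains_inf[OF \<open>compact S\<close> \<open>S \<noteq> {}\<close>
        continuous_on_subset[OF continuous_on_dist_0 \<open>S \<subseteq> - {0}\<close>]]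
    by blast
  define c where "c = d u0 0"
  have "0 < c" unfolding c_def using u0(1) dist_0_pos by (auto simp: S_def infnorm_0)
  have "\<bar>p $ i\<bar> \<le> (d p 0 / c) ^ deg i" for p i
  proof (cases "p = 0")
    case False
    then obtain t u where tu: "0 < t" "infnorm u = 1" "p = dil deg t u"
      using dil_infnorm_decomposition[of deg p] deg_pos by blast
    then have "t * c \<le> d p 0"
      using u0(2)[of u] dist_dil_0[of t u] unfolding S_def c_def by simp
    then have "t \<le> d p 0 / c" using \<open>0 < c\<close> by (simp add: field_simps)
    have "\<bar>p $ i\<bar> = t ^ deg i * \<bar>u $ i\<bar>" using tu by (simp add: abs_mult)
    also have "\<dots> \<le> t ^ deg i"
      using component_le_infnorm_cart[of u i] tu \<open>0 < t\<close> by (simp add: mult_left_le)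
    also have "\<dots> \<le> (d p 0 / c) ^ deg i"
      using \<open>t \<le> d p 0 / c\<close> \<open>0 < t\<close> by (intro power_mono) auto
    finally show ?thesis .
  qed (use \<open>0 < c\<close> in simp)
  with \<open>0 < c\<close> show ?thesis by blast
qed

lemma norm_le_dist_0: "\<exists>C\<ge>0. \<forall>z. d z 0 \<le> 1 \<longrightarrow> norm z \<le> C * d z 0"
proof -
  obtain c where c: "0 < c" "\<And>p i. \<bar>p $ i\<bar> \<le> (d p 0 / c) ^ deg i"
    using component_le_dist_0 by blast
  define C where "C = (\<Sum>j\<in>UNIV. (1/c) ^ deg j)"
  have "norm z \<le> C * d z 0" if "d z 0 \<le> 1" for z
  proof -
    have "\<bar>z $ j\<bar> \<le> (1/c) ^ deg j * d z 0" for j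
    proof -
      have "d z 0 ^ deg j \<le> d z 0 ^ 1"
        using that deg_pos[of j] by (intro power_decreasing) auto
      then have "(1/c) ^ deg j * d z 0 ^ deg j \<le> (1/c) ^ deg j * d z 0"
        using \<open>0 < c\<close> by (intro mult_left_mono) auto
      then show ?thesis
        using c(2)[of z j] by (simp add: power_divide)
    qed
    then have "(\<Sum>j\<in>UNIV. \<bar>z $ j\<bar>) \<le> C * d z 0"
      unfolding C_def sum_distrib_right by (intro sum_mono) auto
    then show ?thesis using norm_le_l1_cart[of z] by linarith
  qed
  moreover have "0 \<le> C" unfolding C_def using \<open>0 < c\<close> by (intro sum_nonneg) simp
  ultimately show ?thesis by blast
qed

lemma Omega_component: "Omega deg d p $ i = p $ i / d p 0 ^ (deg i + 1)"
  by (simp add: Omega_def)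

lemma Omega_dil: "0 < t \<Longrightarrow> Omega deg d (dil deg t p) $ i = Omega deg d p $ i / t"
  by (cases "d p 0 = 0") (simp_all add: Omega_component dist_dil_0 power_mult_distrib field_simps)

lemma Omega_uminus: "Omega deg d (- p) $ i = - Omega deg d p $ i"
  by (simp add: Omega_component dist_uminus_0)

lemma continuous_on_Omega: "continuous_on (- {0}) (\<lambda>p. Omega deg d p $ i)"
  unfolding Omega_component
  by (intro continuous_intros continuous_on_dist_0) (auto dest: dist_0_pos)

lemma Omega_bound: "\<exists>B>0. \<forall>p. p \<noteq> 0 \<longrightarrow> \<bar>Omega deg d p $ i\<bar> \<le> B / d p 0"
proof -
  obtain c where c: "0 < c" "\<And>p i. \<bar>p $ i\<bar> \<le> (d p 0 / c) ^ deg i"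
    using component_le_dist_0 by blast
  have "\<bar>Omega deg d p $ i\<bar> \<le> (1/c) ^ deg i / d p 0" if "p \<noteq> 0" for p
  proof -
    have "0 < d p 0" using that by (rule dist_0_pos)
    then have "\<bar>Omega deg d p $ i\<bar> = \<bar>p $ i\<bar> / d p 0 ^ (deg i + 1)"
      by (simp add: Omega_component abs_divide)
    also have "\<dots> \<le> (d p 0 / c) ^ deg i / d p 0 ^ (deg i + 1)"
      using c(2) \<open>0 < d p 0\<close> by (intro divide_right_mono) auto
    also have "\<dots> = (1/c) ^ deg i / d p 0"
      using \<open>0 < d p 0\<close> by (simp add: power_divide)
    finally show ?thesis .
  qed
  then show ?thesis using \<open>0 < c\<close> by (intro exI[of _ "(1/c) ^ deg i"]) auto
qed

lemma component_lipschitz_near_unit_ball: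
  "\<exists>C. \<forall>x y. d x 0 \<le> 1 \<longrightarrow> d x y \<le> 1 \<longrightarrow> \<bar>x $ i - y $ i\<bar> \<le> C * d x y"
proof -
  obtain N where N: "0 \<le> N" "\<And>z. d z 0 \<le> 1 \<Longrightarrow> norm z \<le> N * d z 0"
    using norm_le_dist_0 by blast
  obtain L where L: "L-lipschitz_on (cball 0 (2 * N)) (\<lambda>z. gmul (fst z) (snd z) $ i)"
    using poly_fun_bounded_lipschitz_on_cball[OF gmul_polynomial] by blast
  have "\<bar>x $ i - y $ i\<bar> \<le> L * N * d x y" if x: "d x 0 \<le> 1" and xy: "d x y \<le> 1" for x y
  proof -
    define z where "z = gmul (- x) y"
    have "d z 0 = d x y" unfolding z_def dist_translate_0 by (rule metric.commute)
    then have z: "norm z \<le> N * d x y" using N(2)[of z] xy by simp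
    also have "\<dots> \<le> N" using xy N(1) by (simp add: mult_left_le)
    finally have "norm z \<le> N" .
    have "norm x \<le> N" using N(2)[OF x] x N(1) by (smt (verit) mult_left_le metric.nonneg)
    have xz: "(x, z) \<in> cball 0 (2 * N)"
      unfolding mem_cball_0 using norm_Pair_le[of x z] \<open>norm x \<le> N\<close> \<open>norm z \<le> N\<close> by simp
    have x0: "(x, 0 :: real^'n) \<in> cball 0 (2 * N)"
      unfolding mem_cball_0 using \<open>norm x \<le> N\<close> N(1) by (simp add: norm_Pair)
    have "\<bar>y $ i - x $ i\<bar> \<le> L * norm z"
      using lipschitz_onD[OF L xz x0] unfolding z_def by (simp add: dist_Pair_Pair dist_norm)
    also have "\<dots> \<le> L * (N * d x y)"
      using z lipschitz_on_nonneg[OF L] by (rule mult_left_mono)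
    finally show ?thesis by (simp add: abs_minus_commute mult.assoc)
  qed
  then show ?thesis by blast
qed

lemma Omega_lipschitz_near_unit_sphere:
  "\<exists>H. \<forall>x y. d x 0 = 1 \<longrightarrow> d x y \<le> 1/2 \<longrightarrow>
      \<bar>Omega deg d x $ i - Omega deg d y $ i\<bar> \<le> H * d x y"
proof -
  obtain C where C: "\<And>x y. d x 0 \<le> 1 \<Longrightarrow> d x y \<le> 1 \<Longrightarrow> \<bar>x $ i - y $ i\<bar> \<le> C * d x y"
    using component_lipschitz_near_unit_ball by blast
  obtain c where c: "0 < c" "\<And>p i. \<bar>p $ i\<bar> \<le> (d p 0 / c) ^ deg i"
    using component_le_dist_0 by blast
  define m where "m = deg i + 1"
  define K where "K = (2 / c) ^ deg i * (4 ^ m * real m)"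
  have "\<bar>Omega deg d x $ i - Omega deg d y $ i\<bar> \<le> (C + K) * d x y"
    if x: "d x 0 = 1" and xy: "d x y \<le> 1/2" for x y
  proof -
    define a where "a = d y 0"
    have "\<bar>a - 1\<bar> \<le> d x y"
      using metric.triangle[of x y 0] metric.triangle[of y x 0] x
      unfolding a_def by (simp add: metric.commute abs_le_iff)
    then have a: "1/2 \<le> a" "a \<le> 2" using xy by auto
    have "\<bar>y $ i\<bar> \<le> (2 / c) ^ deg i"
      using c(2)[of y i] power_mono[of "a / c" "2 / c" "deg i"] a \<open>0 < c\<close>
      unfolding a_def by (simp add: divide_right_mono)
    moreover have "\<bar>1 / a ^ m - 1\<bar> \<le> 4 ^ m * real m * d x y"
      using abs_inverse_power_sub_one_le[OF a, of m] \<open>\<bar>a - 1\<bar> \<le> d x y\<close>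
      by (smt (verit) mult_left_mono mult_nonneg_nonneg of_nat_0_le_iff zero_le_power)
    ultimately have "\<bar>y $ i * (1 / a ^ m - 1)\<bar> \<le> K * d x y"
      unfolding abs_mult K_def by (simp add: mult.assoc mult_mono)
    moreover have "Omega deg d x $ i - Omega deg d y $ i = (x $ i - y $ i) - y $ i * (1 / a ^ m - 1)"
      using x unfolding Omega_component a_def m_def by (simp add: algebra_simps)
    ultimately show ?thesis
      using C[of x y] x xy by (simp add: abs_le_iff algebra_simps)
  qed
  then show ?thesis by blast
qed

lemma Omega_left_translate_diff_le:
  "\<exists>H\<ge>0. \<forall>p1 p2 q. d p1 p2 \<le> d p1 q / 2 \<longrightarrow>
     \<bar>Omega deg d (gmul (- q) p1) $ i - Omega deg d (gmul (- q) p2) $ i\<bar> \<le> H * d p1 p2 / d p1 q ^ 2"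
proof -
  obtain H where H: "\<And>x y. d x 0 = 1 \<Longrightarrow> d x y \<le> 1/2 \<Longrightarrow>
      \<bar>Omega deg d x $ i - Omega deg d y $ i\<bar> \<le> H * d x y"
    using Omega_lipschitz_near_unit_sphere by blast
  have "\<bar>Omega deg d (gmul (- q) p1) $ i - Omega deg d (gmul (- q) p2) $ i\<bar> \<le> \<bar>H\<bar> * d p1 p2 / d p1 q ^ 2"
    if close: "d p1 p2 \<le> d p1 q / 2" for p1 p2 q
  proof -
    define x y \<rho> where "x = gmul (- q) p1" and "y = gmul (- q) p2" and "\<rho> = d p1 q"
    have "d x 0 = \<rho>" unfolding x_def \<rho>_def dist_translate_0 ..
    have "d x y = d p1 p2" unfolding x_def y_def by (rule dist_left_translate)
    show ?thesis
    proof (cases "\<rho> = 0")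
      case True
      then have "d p1 p2 = 0" using close metric.nonneg[of p1 p2] unfolding \<rho>_def by linarith
      then show ?thesis by simp
    next
      case False
      then have "0 < \<rho>" using metric.nonneg[of p1 q] unfolding \<rho>_def by linarith
      define x0 y0 where "x0 = dil deg (1/\<rho>) x" and "y0 = dil deg (1/\<rho>) y"
      have "x = dil deg \<rho> x0" "y = dil deg \<rho> y0"
        unfolding x0_def y0_def dil_dil using \<open>0 < \<rho>\<close> by simp_all
      have "d x0 0 = 1" unfolding x0_def using \<open>0 < \<rho>\<close> \<open>d x 0 = \<rho>\<close> by (simp add: dist_dil_0)
      have "d x0 y0 = d p1 p2 / \<rho>"
        unfolding x0_def y0_def using \<open>0 < \<rho>\<close> \<open>d x y = d p1 p2\<close> by (simp add: dist_dil)
      also have "\<dots> \<le> 1/2" using close \<open>0 < \<rho>\<close> unfolding \<rho>_def by (simp add: field_simps)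
      finally have "d x0 y0 \<le> 1/2" .
      have "\<bar>Omega deg d x $ i - Omega deg d y $ i\<bar> = \<bar>Omega deg d x0 $ i - Omega deg d y0 $ i\<bar> / \<rho>"
        unfolding \<open>x = dil deg \<rho> x0\<close> \<open>y = dil deg \<rho> y0\<close> Omega_dil[OF \<open>0 < \<rho>\<close>]
        using \<open>0 < \<rho>\<close> by (simp add: diff_divide_distrib[symmetric] abs_divide)
      also have "\<dots> \<le> H * (d p1 p2 / \<rho>) / \<rho>"
        using H[OF \<open>d x0 0 = 1\<close> \<open>d x0 y0 \<le> 1/2\<close>] \<open>0 < \<rho>\<close> \<open>d x0 y0 = d p1 p2 / \<rho>\<close>
        by (intro divide_right_mono) auto
      also have "\<dots> \<le> \<bar>H\<bar> * d p1 p2 / \<rho> ^ 2"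
        using \<open>0 < \<rho>\<close> metric.nonneg[of p1 p2]
        by (simp add: power2_eq_square divide_right_mono mult_right_mono)
      finally show ?thesis unfolding x_def y_def \<rho>_def .
    qed
  qed
  then show ?thesis by (intro exI[of _ "\<bar>H\<bar>"]) auto
qed

lemma CZ_kernel_Omega: "CZ_kernel gmul d (\<lambda>p. Omega deg d p $ i)"
proof -
  obtain B where B: "0 < B" "\<And>p. p \<noteq> 0 \<Longrightarrow> \<bar>Omega deg d p $ i\<bar> \<le> B / d p 0"
    using Omega_bound by blast
  obtain H where H: "0 \<le> H" "\<And>p1 p2 q. d p1 p2 \<le> d p1 q / 2 \<Longrightarrow>
      \<bar>Omega deg d (gmul (- q) p1) $ i - Omega deg d (gmul (- q) p2) $ i\<bar> \<le> H * d p1 p2 / d p1 q ^ 2"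
    using Omega_left_translate_diff_le by blast
  have "\<bar>Omega deg d p $ i\<bar> \<le> (B + 2 * H) / d p 0" if "p \<noteq> 0" for p
    using B(2)[OF that] dist_0_pos[OF that] H(1) by (smt (verit) divide_right_mono)
  moreover have
    "\<bar>Omega deg d (gmul (- q) p1) $ i - Omega deg d (gmul (- q) p2) $ i\<bar>
       + \<bar>Omega deg d (gmul (- p1) q) $ i - Omega deg d (gmul (- p2) q) $ i\<bar>
     \<le> (B + 2 * H) * d p1 p2 powr 1 / d p1 q powr (1 + 1)"
    if "d p1 p2 \<le> d p1 q / 2" for p1 p2 q
  proof -
    have "\<bar>Omega deg d (gmul (- p1) q) $ i - Omega deg d (gmul (- p2) q) $ i\<bar>
        = \<bar>Omega deg d (gmul (- q) p1) $ i - Omega deg d (gmul (- q) p2) $ i\<bar>"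
      by (simp add: gmul_uminus_swap[of p1 q] gmul_uminus_swap[of p2 q] Omega_uminus abs_minus_commute)
    moreover have "2 * H * d p1 p2 / d p1 q ^ 2 \<le> (B + 2 * H) * d p1 p2 / d p1 q ^ 2"
      using B(1) by (intro divide_right_mono mult_right_mono) auto
    moreover have "2 * H * d p1 p2 / d p1 q ^ 2 = 2 * (H * d p1 p2 / d p1 q ^ 2)" by simp
    moreover have powr: "d p1 p2 powr 1 = d p1 p2" "d p1 q powr (1 + 1) = d p1 q ^ 2" by simp_all
    ultimately show ?thesis unfolding powr using H(2)[OF that] by linarith
  qed
  ultimately show ?thesis
    unfolding CZ_kernel_def using continuous_on_Omega B(1) H(1)
    by (intro conjI exI[of _ "B + 2 * H"] exI[of _ "1 :: real"]) auto
qed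

lemma dist_uminus_horizontal_line:
  assumes "L \<in> horizontal_lines deg" "x \<in> L" "y \<in> L"
  shows "d (- x) (- y) = d x y"
proof -
  obtain v a b where xy: "x = a *\<^sub>R v" "y = b *\<^sub>R v"
    using assms unfolding horizontal_lines_def by blast
  have "d x y = d ((a - b) *\<^sub>R v) 0"
    using dist_translate_0[of y x] gmul_one_parameter[of "- b" v a] xy by simp
  moreover have "d (- x) (- y) = d ((a - b) *\<^sub>R v) 0"
    using dist_translate_0[of "- x" "- y"] gmul_one_parameter[of a v "- b"] xy
    by (simp add: metric.commute)
  ultimately show ?thesis by simp
qed

lemma annular_bounded_odd_kernel:
  assumes K: "continuous_on (- {0}) K" "\<And>p. K (- p) = - K p"
  shows "annular_bounded deg d K"
  unfolding annular_bounded_def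
proof (intro allI impI)
  fix \<psi> :: "real^'n \<Rightarrow> real"
  assume \<psi>: "smooth_fun \<psi> \<and> radial d \<psi> \<and>
    (\<forall>p. indicator (dball0 d (1/2)) p \<le> \<psi> p \<and> \<psi> p \<le> indicator (dball0 d 2) p)"
  obtain F where F: "\<And>p. \<psi> p = F (d p 0)" using \<psi> unfolding radial_def by blast
  have "continuous_on UNIV \<psi>" using \<psi> unfolding smooth_fun_def by (metis Ck.simps(1))
  then have \<psi>_dil: "continuous_on (- {0}) (\<lambda>p. \<psi> (dil deg a p))" for a
    unfolding dil_def by (rule continuous_on_compose2) (auto intro!: continuous_intros)
  have "(LINT p:L|H1_measure d. (\<psi> (dil deg (1/R) p) - \<psi> (dil deg (1/r) p)) * K p) = 0"
    if L: "L \<in> horizontal_lines deg" for r R L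
  proof (rule set_integral_odd_eq_0)
    show "L \<in> sets borel" using L by (rule horizontal_line_borel)
    show "- x \<in> L" if "x \<in> L" for x using L that by (rule horizontal_line_uminus)
    show "emeasure (H1_measure d) (uminus ` A) = emeasure (H1_measure d) A"
      if "A \<in> sets borel" "A \<subseteq> L" for A
      using L that horizontal_line_uminus dist_uminus_horizontal_line
      by (intro emeasure_H1_measure_uminus_image[of L]) auto
    show "(\<lambda>p. (\<psi> (dil deg (1/R) p) - \<psi> (dil deg (1/r) p)) * K p) \<in> borel_measurable borel"
      by (rule borel_measurable_continuous_countable_exceptions[of "{0}"])
        (auto intro!: continuous_intros \<psi>_dil K(1))
    have "\<psi> (dil deg a (- p)) = \<psi> (dil deg a p)" for a p
      unfolding dil_uminus F dist_uminus_0 ..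
    then show "(\<psi> (dil deg (1/R) (- p)) - \<psi> (dil deg (1/r) (- p))) * K (- p)
        = - ((\<psi> (dil deg (1/R) p) - \<psi> (dil deg (1/r) p)) * K p)" for p
      by (simp add: K(2))
  qed (rule sets_H1_measure)
  then show "\<exists>A\<ge>1. \<forall>r R. 0 < r \<and> r < R \<longrightarrow> (\<forall>L\<in>horizontal_lines deg.
      \<bar>LINT p:L|H1_measure d. (\<psi> (dil deg (1/R) p) - \<psi> (dil deg (1/r) p)) * K p\<bar> \<le> A)"
    by (intro exI[of _ 1]) auto
qed

lemma annular_bounded_Omega: "annular_bounded deg d (\<lambda>p. Omega deg d p $ i)"
  using continuous_on_Omega Omega_uminus by (rule annular_bounded_odd_kernel)

end

theorem mainTheorem10:
  fixes gmul :: "real^'n \<Rightarrow> real^'n \<Rightarrow> real^'n"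
    and deg :: "'n \<Rightarrow> nat" and s :: nat
    and d :: "real^'n \<Rightarrow> real^'n \<Rightarrow> real"
  assumes "carnot_group gmul deg s"
    and "homogeneous_metric gmul deg d"
    and "\<forall>v\<in>layer deg 1. d v 0 = norm v"
    and "\<exists>D :: real^'n \<Rightarrow> ((real^'n) \<Rightarrow>\<^sub>L real).
           (\<forall>p. p \<noteq> 0 \<longrightarrow> ((\<lambda>q. d q 0) has_derivative blinfun_apply (D p)) (at p)) \<and>
           continuous_on (- {0}) D"
  shows "\<forall>i. CZ_kernel gmul d (\<lambda>p. Omega deg d p $ i) \<and>
             annular_bounded deg d (\<lambda>p. Omega deg d p $ i)"
proof -
  \<comment> \<open>Only the continuity of d(\<cdot>,0) off 0 is used.\<close>
  interpret carnot_homogeneous_metric gmul deg s d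
    using assms(1,2,4) by unfold_locales (auto dest: has_derivative_continuous)
  show ?thesis using CZ_kernel_Omega annular_bounded_Omega by blast
qed

end
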